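(* Let $K$ be a field of characteristic zero. Suppose that for all $f,g\in K[X]$ and $x_0,y_0\in K$ the following holds: if $\{(f^n(x_0),g^n(y_0)):n\in\mathbb{N}\}$ has infinite intersection with the diagonal line $X=Y$ in $\mathbb{A}^2$, then the diagonal is periodic under the action of $(f,g)$. Then for all $f,g\in K[X]$, $x_0,y_0\in K$ and every line $L$ in $\mathbb{A}^2$ defined over $K$: if $\{(f^n(x_0),g^n(y_0)):n\in\mathbb{N}\}$ has infinite intersection with $L$, then $L$ is periodic under the action of $(f,g)$.
   Context: $f^n$ denotes the $n$-th iterate of $f$ under composition; $\mathbb{N}$ is the set of positive integers. The pair $(f,g)$ acts on $\mathbb{A}^2$ by $(x,y)\mapsto(f(x),g(y))$; a line $L$ is periodic under this action if there is $k\in\mathbb{N}$ such that $(x,y)\mapsto(f^k(x),g^k(y))$ maps $L$ into $L$. *)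

theory Defs
  imports "HOL-Computational_Algebra.Polynomial"
begin

definition orbit2 :: "'a::comm_semiring_0 poly \<Rightarrow> 'a poly \<Rightarrow> 'a \<Rightarrow> 'a \<Rightarrow> ('a \<times> 'a) set" where
  "orbit2 f g x0 y0 = {((poly f ^^ n) x0, (poly g ^^ n) y0) | n. n \<ge> 1}"

definition is_line :: "('a::field \<times> 'a) set \<Rightarrow> bool" where
  "is_line L \<longleftrightarrow> (\<exists>a b c. (a, b) \<noteq> (0, 0) \<and> L = {(x, y). a * x + b * y = c})"

definition diagonal :: "('a \<times> 'a) set" where
  "diagonal = {(x, y). x = y}"

definition periodic_line :: "'a::comm_semiring_0 poly \<Rightarrow> 'a poly \<Rightarrow> ('a \<times> 'a) set \<Rightarrow> bool" where
  "periodic_line f g L \<longleftrightarrow>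
     (\<exists>k::nat. k \<ge> 1 \<and> (\<forall>(x, y) \<in> L. ((poly f ^^ k) x, (poly g ^^ k) y) \<in> L))"

end

theory Submission
  imports Defs
begin

text \<open>
  Write \<open>L\<close> as \<open>a x + b y = c\<close>. If \<open>b = 0\<close>, the line is \<open>x = p\<close>, so \<open>f\<^sup>n(x\<^sub>0) = p\<close>
  for infinitely many \<open>n\<close>; then \<open>p\<close> is \<open>f\<close>-periodic and \<open>L\<close> is periodic. The case \<open>a = 0\<close>
  is the same after swapping the coordinates. Otherwise \<open>L\<close> is the graph \<open>x = \<psi>(y)\<close> of an
  affine bijection \<open>\<psi>\<close>; conjugating \<open>g\<close> by \<open>\<psi>\<close> gives a polynomial \<open>g'\<close>, and
  \<open>(x, y) \<mapsto> (x, \<psi>(y))\<close> carries the orbit of \<open>(f, g)\<close> bijectively onto an orbit of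
  \<open>(f, g')\<close> and \<open>L\<close> onto the diagonal, where the hypothesis applies.
\<close>

lemma funpow_periodic_if_infinitely_many_hits:
  assumes "infinite {n. (h ^^ n) x = p}"
  shows "\<exists>k\<ge>1. (h ^^ k) p = p"
proof -
  obtain m where m: "(h ^^ m) x = p"
    using infinite_imp_nonempty[OF assms] by auto
  obtain n where "n > m" "(h ^^ n) x = p"
    using assms unfolding infinite_nat_iff_unbounded by auto
  have "(h ^^ (n - m)) p = (h ^^ (n - m + m)) x"
    by (simp add: funpow_add m)
  also have "\<dots> = p"
    using \<open>n > m\<close> \<open>(h ^^ n) x = p\<close> by simp
  finally show ?thesis
    using \<open>n > m\<close> by (intro exI[of _ "n - m"]) simp
qed

lemma funpow_conj:
  assumes "\<And>x. h (\<psi> x) = \<psi> (k x)"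
  shows "(h ^^ n) (\<psi> x) = \<psi> ((k ^^ n) x)"
  by (induction n) (simp_all add: assms)

lemma infinite_orbit2_Int_imp_infinite_indices:
  assumes "infinite (orbit2 f g x0 y0 \<inter> S)"
  shows "infinite {n. ((poly f ^^ n) x0, (poly g ^^ n) y0) \<in> S}"
proof
  let ?N = "{n. ((poly f ^^ n) x0, (poly g ^^ n) y0) \<in> S}"
  assume "finite ?N"
  moreover have "orbit2 f g x0 y0 \<inter> S \<subseteq> (\<lambda>n. ((poly f ^^ n) x0, (poly g ^^ n) y0)) ` ?N"
    unfolding orbit2_def by auto
  ultimately have "finite (orbit2 f g x0 y0 \<inter> S)"
    by (rule finite_surj)
  with assms show False ..
qed

lemma infinite_orbit2_Int_image:
  assumes "inj h" "h ` orbit2 f g x0 y0 = orbit2 f' g' x0' y0'"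
    and "infinite (orbit2 f g x0 y0 \<inter> L)"
  shows "infinite (orbit2 f' g' x0' y0' \<inter> h ` L)"
proof -
  have "orbit2 f' g' x0' y0' \<inter> h ` L = h ` (orbit2 f g x0 y0 \<inter> L)"
    unfolding image_Int[OF assms(1)] assms(2) ..
  moreover have "inj_on h (orbit2 f g x0 y0 \<inter> L)"
    by (rule inj_on_subset[OF assms(1) subset_UNIV])
  ultimately show ?thesis
    using assms(3) by (simp add: finite_image_iff)
qed

lemma periodic_line_vertical:
  assumes "infinite (orbit2 f g x0 y0 \<inter> {(x, y). x = p})"
  shows "periodic_line f g {(x, y). x = p}"
proof -
  have "infinite {n. (poly f ^^ n) x0 = p}"
    using infinite_orbit2_Int_imp_infinite_indices[OF assms] by simp
  then obtain k where "k \<ge> 1" "(poly f ^^ k) p = p"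
    using funpow_periodic_if_infinitely_many_hits[of "poly f" x0 p] by auto
  then show ?thesis
    unfolding periodic_line_def by auto
qed

lemma orbit2_eq_image:
  "orbit2 f g x0 y0 = (\<lambda>n. ((poly f ^^ n) x0, (poly g ^^ n) y0)) ` {1..}"
  unfolding orbit2_def by auto

lemma orbit2_swap: "prod.swap ` orbit2 f g x0 y0 = orbit2 g f y0 x0"
  unfolding orbit2_eq_image by (simp add: image_image)

lemma periodic_line_swap: "periodic_line g f (prod.swap ` L) \<longleftrightarrow> periodic_line f g L"
  unfolding periodic_line_def by auto

lemma periodic_line_horizontal:
  assumes "infinite (orbit2 f g x0 y0 \<inter> {(x, y). y = q})"
  shows "periodic_line f g {(x, y). y = q}"
proof -
  have swap_line: "prod.swap ` {(x, y). y = q} = {(x, y). x = q}"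
    by auto
  have "infinite (orbit2 g f y0 x0 \<inter> {(x, y). x = q})"
    using infinite_orbit2_Int_image[OF _ orbit2_swap assms] by (simp add: swap_line)
  then have "periodic_line g f (prod.swap ` {(x, y). y = q})"
    unfolding swap_line by (rule periodic_line_vertical)
  then show ?thesis
    by (simp only: periodic_line_swap)
qed

lemma orbit2_map_snd:
  assumes "\<And>y. poly g' (\<psi> y) = \<psi> (poly g y)"
  shows "map_prod id \<psi> ` orbit2 f g x0 y0 = orbit2 f g' x0 (\<psi> y0)"
  unfolding orbit2_eq_image
  by (simp add: image_image funpow_conj[of "poly g'" \<psi> "poly g", OF assms])

lemma inj_map_prod_id: "inj \<psi> \<Longrightarrow> inj (map_prod id \<psi>)"
  using map_prod_inj_on[of id UNIV \<psi> UNIV] by simp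

lemma periodic_line_map_snd:
  assumes "\<And>y. poly g' (\<psi> y) = \<psi> (poly g y)" "inj \<psi>"
  shows "periodic_line f g' (map_prod id \<psi> ` L) \<longleftrightarrow> periodic_line f g L"
proof -
  have "((poly f ^^ k) x, (poly g' ^^ k) (\<psi> y)) \<in> map_prod id \<psi> ` L
          \<longleftrightarrow> ((poly f ^^ k) x, (poly g ^^ k) y) \<in> L" for k x y
    using inj_image_mem_iff[OF inj_map_prod_id[OF \<open>inj \<psi>\<close>], of "((poly f ^^ k) x, (poly g ^^ k) y)" L]
    by (simp add: funpow_conj[of "poly g'" \<psi> "poly g", OF assms(1)])
  moreover have "(\<forall>(x, y) \<in> map_prod id \<psi> ` L. Q x y) \<longleftrightarrow> (\<forall>(x, y) \<in> L. Q x (\<psi> y))" for Q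
    by auto
  ultimately show ?thesis
    unfolding periodic_line_def by simp
qed

lemma poly_affine_conj:
  fixes u v :: "'a::field"
  assumes "u \<noteq> 0"
  shows "poly ([:v, u:] \<circ>\<^sub>p (g \<circ>\<^sub>p [:- v / u, 1 / u:])) (u * y + v) = u * poly g y + v"
  using assms by (simp add: poly_pcompose field_simps)

lemma periodic_line_graph:
  fixes f g :: "'a::field poly"
  assumes "u \<noteq> 0"
    and "infinite (orbit2 f g x0 y0 \<inter> {(x, y). x = u * y + v})"
    and diag: "\<And>g' x0 y0. infinite (orbit2 f g' x0 y0 \<inter> diagonal) \<Longrightarrow> periodic_line f g' diagonal"
  shows "periodic_line f g {(x, y). x = u * y + v}"
proof -
  define \<psi> where "\<psi> y = u * y + v" for y
  define g' where "g' = [:v, u:] \<circ>\<^sub>p (g \<circ>\<^sub>p [:- v / u, 1 / u:])"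
  have conj: "poly g' (\<psi> y) = \<psi> (poly g y)" for y
    unfolding g'_def \<psi>_def using poly_affine_conj[OF \<open>u \<noteq> 0\<close>] .
  have "inj \<psi>"
    using \<open>u \<noteq> 0\<close> by (auto simp: inj_on_def \<psi>_def)
  have "\<psi> ((z - v) / u) = z" for z
    using \<open>u \<noteq> 0\<close> by (simp add: \<psi>_def)
  then have "(z, z) \<in> map_prod id \<psi> ` {(x, y). x = \<psi> y}" for z
    by (intro image_eqI[where x = "(z, (z - v) / u)"]) auto
  then have graph: "map_prod id \<psi> ` {(x, y). x = \<psi> y} = diagonal"
    unfolding diagonal_def by auto
  have "inj (map_prod id \<psi>)"
    using \<open>inj \<psi>\<close> by (rule inj_map_prod_id)
  moreover have "infinite (orbit2 f g x0 y0 \<inter> {(x, y). x = \<psi> y})"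
    using assms(2) by (simp add: \<psi>_def)
  ultimately have "infinite (orbit2 f g' x0 (\<psi> y0) \<inter> map_prod id \<psi> ` {(x, y). x = \<psi> y})"
    by (rule infinite_orbit2_Int_image[OF _ orbit2_map_snd[where g' = g' and \<psi> = \<psi> and g = g, OF conj]])
  then have "infinite (orbit2 f g' x0 (\<psi> y0) \<inter> diagonal)"
    by (simp add: graph)
  then have "periodic_line f g' (map_prod id \<psi> ` {(x, y). x = \<psi> y})"
    unfolding graph by (rule diag)
  then have "periodic_line f g {(x, y). x = \<psi> y}"
    by (rule iffD1[OF periodic_line_map_snd[where g' = g' and \<psi> = \<psi> and g = g, OF conj \<open>inj \<psi>\<close>]])
  then show ?thesis
    unfolding \<psi>_def .
qed

theorem lemma5p1:
  assumes diag: "\<And>(f :: 'a::field_char_0 poly) g x0 y0.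
      infinite (orbit2 f g x0 y0 \<inter> diagonal) \<Longrightarrow> periodic_line f g diagonal"
  shows "\<forall>(f :: 'a poly) g x0 y0 L. is_line L \<longrightarrow> infinite (orbit2 f g x0 y0 \<inter> L)
            \<longrightarrow> periodic_line f g L"
proof (intro allI impI)
  fix f g :: "'a poly" and x0 y0 L
  assume "is_line L" and inf: "infinite (orbit2 f g x0 y0 \<inter> L)"
  then obtain a b c where ab: "(a, b) \<noteq> (0, 0)" and L: "L = {(x, y). a * x + b * y = c}"
    unfolding is_line_def by blast
  consider "b = 0" "a \<noteq> 0" | "a = 0" "b \<noteq> 0" | "a \<noteq> 0" "b \<noteq> 0"
    using ab by auto
  then show "periodic_line f g L"
  proof cases
    case 1
    then have line: "L = {(x, y). x = c / a}"
      unfolding L by (auto simp: field_simps)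
    from inf show ?thesis
      unfolding line by (rule periodic_line_vertical)
  next
    case 2
    then have line: "L = {(x, y). y = c / b}"
      unfolding L by (auto simp: field_simps)
    from inf show ?thesis
      unfolding line by (rule periodic_line_horizontal)
  next
    case 3
    then have line: "L = {(x, y). x = (- b / a) * y + c / a}"
      unfolding L by (auto simp: field_simps)
    have "- b / a \<noteq> 0"
      using 3 by simp
    moreover have "infinite (orbit2 f g x0 y0 \<inter> {(x, y). x = (- b / a) * y + c / a})"
      using inf line by simp
    ultimately show ?thesis
      unfolding line by (rule periodic_line_graph) (rule diag)
  qed
qed

end
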